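(* Let $n$ be a positive integer and $N=2^n$. Let $\delta,\alpha\in(0,1]$ be real numbers with $\alpha\le\delta/2$, $\delta\le2^{-5}$, and $$\frac{2\delta}{\alpha}\log\frac{1}{2\alpha}\le\log N.$$ Then there exists a set $A\subseteq\mathbb{Z}_2^n$ such that $\delta N\le|A|\le8\delta N$, $|\mathcal{R}_\alpha(A)|\ge\frac{\delta}{8\alpha^2}$, and for every integer $k$ with $2\le k\le\frac12\log(1/(8\delta))$ we have $T_k(\mathcal{R}_\alpha(A))\le\frac{8\delta}{\alpha^{2k}}$.
   Context: $\mathbb{Z}_2^n=(\mathbb{Z}/2\mathbb{Z})^n$ with inner product $\langle\vec x,\vec y\rangle=x_1y_1+\dots+x_ny_n\pmod 2$; $\log$ is the logarithm to base $2$. For $f:\mathbb{Z}_2^n\to\mathbb{C}$, $\widehat f(\vec r)=\sum_{\vec x\in\mathbb{Z}_2^n}(-1)^{\langle\vec r,\vec x\rangle}f(\vec x)$; $A(\vec x)$ is the indicator of $A$, and $\mathcal{R}_\alpha(A)=\{\vec r\in\mathbb{Z}_2^n:|\widehat A(\vec r)|\ge\alpha N\}$. For $B\subseteq\mathbb{Z}_2^n$, $T_k(B)=|\{(r_1,\dots,r_k,r_1',\dots,r_k')\in B^{2k}: r_1+\dots+r_k=r_1'+\dots+r_k'\}|$. *)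

theory Defs
  imports "HOL-Analysis.Analysis"
begin

text \<open>Model of Z_2^n: boolean lists of length n (True = 1).\<close>

definition cube :: "nat \<Rightarrow> bool list set" where
  "cube n = {x. length x = n}"

definition vadd :: "bool list \<Rightarrow> bool list \<Rightarrow> bool list" where
  "vadd x y = map2 (\<lambda>a b. a \<noteq> b) x y"

definition vzero :: "nat \<Rightarrow> bool list" where
  "vzero n = replicate n False"

definition ip :: "bool list \<Rightarrow> bool list \<Rightarrow> bool" where
  "ip x y = odd (card {i. i < length x \<and> x ! i \<and> y ! i})"

definition fourier :: "nat \<Rightarrow> bool list set \<Rightarrow> bool list \<Rightarrow> real" where
  "fourier n A r = (\<Sum>x\<in>cube n. (if ip r x then -1 else 1) * (if x \<in> A then 1 else 0))"

definition large_spec :: "nat \<Rightarrow> real \<Rightarrow> bool list set \<Rightarrow> bool list set" where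
  "large_spec n \<alpha> A = {r \<in> cube n. \<bar>fourier n A r\<bar> \<ge> \<alpha> * 2 ^ n}"

definition vsum :: "nat \<Rightarrow> bool list list \<Rightarrow> bool list" where
  "vsum n rs = foldr vadd rs (vzero n)"

definition Tk :: "nat \<Rightarrow> nat \<Rightarrow> bool list set \<Rightarrow> nat" where
  "Tk n k B = card {(rs, rs'). rs \<in> {xs. set xs \<subseteq> B \<and> length xs = k}
      \<and> rs' \<in> {xs. set xs \<subseteq> B \<and> length xs = k} \<and> vsum n rs = vsum n rs'}"

end

theory Submission
  imports Defs
begin

(* Split the first m t coordinates into m blocks of t coordinates and let A consist of the
  vectors that vanish on at least one block. The complement of A is a product of the indicators
  "block i is nonzero", so its Fourier coefficients factorise: at r they are, up to sign,
  2^(n - m t) (2^t - 1)^e, where e is the number of blocks missed by r, when r is supported in the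
  blocks, and 0 otherwise. With 2^t close to 1/(2 alpha) and m close to 3 delta 2^t, the density of A
  is about m/2^t, and the large spectrum of A consists exactly of the vectors supported in a single
  block. In a relation r_1 + ... + r_k = r_1' + ... + r_k' among such vectors, label each vector by
  its block; once the labels are fixed, at each of the l distinct labels one vector is determined
  by the others, so there are at most 2^(t (2k - l)) relations. Summing over the labellings bounds
  T_k by (2k + 1) 2^(2kt) m/2^t, which is at most 8 delta / alpha^(2k). *)

section \<open>Walsh characters of finite sets of coordinates\<close>

definition walsh :: "nat set \<Rightarrow> nat set \<Rightarrow> real" where
  "walsh R X = (-1) ^ card (R \<inter> X)"

lemma walsh_empty [simp]: "walsh R {} = 1"
  by (simp add: walsh_def)

lemma walsh_Un:
  assumes "finite X" "finite Y" "X \<inter> Y = {}"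
  shows "walsh R (X \<union> Y) = walsh R X * walsh R Y"
proof -
  have "card (R \<inter> (X \<union> Y)) = card (R \<inter> X) + card (R \<inter> Y)"
    using assms by (subst card_Un_disjoint[symmetric]) (auto simp: Int_Un_distrib)
  then show ?thesis
    by (simp add: walsh_def power_add)
qed

lemma sum_walsh_Pow:
  assumes "finite I"
  shows "(\<Sum>X\<in>Pow I. walsh R X) = (if R \<inter> I = {} then 2 ^ card I else 0)"
proof -
  let ?s = "\<lambda>i. if i \<in> R then -1 else 1 :: real"
  have "walsh R X = prod ?s X" if "X \<subseteq> I" for X
    using finite_subset[OF that assms]
    by (simp add: walsh_def prod.If_cases Int_commute)
  then have "(\<Sum>X\<in>Pow I. walsh R X) = (\<Sum>X\<in>Pow I. prod ?s X * prod (\<lambda>_. 1) (I - X))"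
    by simp
  also have "\<dots> = (\<Prod>i\<in>I. ?s i + 1)"
    using prod_add[OF assms, of ?s "\<lambda>_. 1"] by simp
  also have "\<dots> = (if R \<inter> I = {} then 2 ^ card I else 0)"
  proof (cases "R \<inter> I = {}")
    case True
    then have "(\<Prod>i\<in>I. ?s i + 1) = (\<Prod>i\<in>I. 2)"
      by (intro prod.cong) auto
    then show ?thesis
      using True by simp
  next
    case False
    then show ?thesis
      using assms by (auto simp: prod_zero_iff)
  qed
  finally show ?thesis .
qed

lemma sum_Pow_Un:
  assumes "finite I" "finite J" "I \<inter> J = {}"
  shows "(\<Sum>X\<in>Pow (I \<union> J). h X) = (\<Sum>X\<in>Pow I. \<Sum>Y\<in>Pow J. h (X \<union> Y))"
proof -
  have "bij_betw (\<lambda>(X, Y). X \<union> Y) (Pow I \<times> Pow J) (Pow (I \<union> J))"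
    by (rule bij_betw_byWitness[where f' = "\<lambda>Z. (Z \<inter> I, Z \<inter> J)"]) (use assms(3) in auto)
  then have "(\<Sum>X\<in>Pow (I \<union> J). h X) = (\<Sum>(X, Y)\<in>Pow I \<times> Pow J. h (X \<union> Y))"
    by (subst sum.reindex_bij_betw[symmetric]) (auto simp: case_prod_unfold)
  then show ?thesis
    by (simp add: sum.cartesian_product)
qed

lemma walsh_sum_Pow_Un_mult:
  assumes "finite I" "finite J" "I \<inter> J = {}"
  shows "(\<Sum>X\<in>Pow (I \<union> J). walsh R X * (f (X \<inter> I) * g (X \<inter> J)))
       = (\<Sum>X\<in>Pow I. walsh R X * f X) * (\<Sum>Y\<in>Pow J. walsh R Y * g Y)"
proof -
  have "walsh R (X \<union> Y) * (f ((X \<union> Y) \<inter> I) * g ((X \<union> Y) \<inter> J))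
      = (walsh R X * f X) * (walsh R Y * g Y)" if "X \<subseteq> I" "Y \<subseteq> J" for X Y
  proof -
    have "(X \<union> Y) \<inter> I = X" "(X \<union> Y) \<inter> J = Y"
      using that assms(3) by auto
    moreover have "walsh R (X \<union> Y) = walsh R X * walsh R Y"
      using that assms by (intro walsh_Un) (auto intro: finite_subset)
    ultimately show ?thesis
      by simp
  qed
  then show ?thesis
    using assms by (simp add: sum_Pow_Un sum_product)
qed

section \<open>Blocks of coordinates\<close>

definition block :: "nat \<Rightarrow> nat \<Rightarrow> nat set" where
  "block t i = {i * t..<i * t + t}"

lemma finite_block [simp]: "finite (block t i)"
  by (simp add: block_def)

lemma card_block [simp]: "card (block t i) = t"
  by (simp add: block_def)

lemma block_subset: "i < m \<Longrightarrow> block t i \<subseteq> {0..<m * t}"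
  using mult_le_mono1[of "Suc i" m t] by (auto simp: block_def)

lemma disjoint_blocks: "i \<noteq> j \<Longrightarrow> block t i \<inter> block t j = {}"
proof -
  have "block t i \<inter> block t j = {}" if "i < j" for i j
    using mult_le_mono1[of "Suc i" j t] that by (auto simp: block_def)
  then show "i \<noteq> j \<Longrightarrow> block t i \<inter> block t j = {}"
    by (metis Int_commute nat_neq_iff)
qed

lemma mem_block_div:
  assumes "x < m * t"
  shows "x \<in> block t (x div t)" "x div t < m"
proof -
  have "0 < t"
    using assms by (cases t) auto
  then have "x div t * t \<le> x" "x < x div t * t + t"
    using div_mult_mod_eq[of x t] mod_less_divisor[of t x] by linarith+
  then show "x \<in> block t (x div t)"
    by (simp add: block_def)
  show "x div t < m"
    using assms \<open>0 < t\<close> by (simp add: div_less_iff_less_mult)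
qed

lemma atLeastLessThan_Suc_mult_block: "{0..<Suc m * t} = {0..<m * t} \<union> block t m"
  by (auto simp: block_def)

definition meets_all_blocks :: "nat \<Rightarrow> nat \<Rightarrow> nat set \<Rightarrow> bool" where
  "meets_all_blocks t m X \<longleftrightarrow> (\<forall>i<m. X \<inter> block t i \<noteq> {})"

lemma meets_all_blocks_Int:
  assumes "m * t \<le> k"
  shows "meets_all_blocks t m (X \<inter> {0..<k}) = meets_all_blocks t m X"
  using block_subset[of _ m t] assms by (fastforce simp: meets_all_blocks_def)

lemma meets_all_blocks_Suc:
  "meets_all_blocks t (Suc m) X \<longleftrightarrow> meets_all_blocks t m X \<and> X \<inter> block t m \<noteq> {}"
  by (auto simp: meets_all_blocks_def less_Suc_eq)

lemma sum_walsh_Pow_nonempty: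
  assumes "finite J"
  shows "(\<Sum>Y\<in>Pow J. walsh R Y * of_bool (Y \<noteq> {})) = (\<Sum>Y\<in>Pow J. walsh R Y) - 1"
proof -
  have "(\<Sum>Y\<in>Pow J. walsh R Y) = walsh R {} + (\<Sum>Y\<in>Pow J - {{}}. walsh R Y)"
    "(\<Sum>Y\<in>Pow J. walsh R Y * of_bool (Y \<noteq> {})) = walsh R {} * 0 + (\<Sum>Y\<in>Pow J - {{}}. walsh R Y * 1)"
    using assms by (auto simp: sum.remove[of "Pow J" "{}"] intro!: sum.cong)
  then show ?thesis
    by simp
qed

lemma walsh_sum_meets_all_blocks_prod:
  "(\<Sum>X\<in>Pow {0..<m * t}. walsh R X * of_bool (meets_all_blocks t m X))
     = (\<Prod>i<m. (if R \<inter> block t i = {} then 2 ^ t else 0) - 1)"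
proof (induction m)
  case 0
  then show ?case
    by (simp add: meets_all_blocks_def)
next
  case (Suc m)
  have disj: "{0..<m * t} \<inter> block t m = {}"
    by (auto simp: block_def)
  have "(\<Sum>X\<in>Pow {0..<Suc m * t}. walsh R X * of_bool (meets_all_blocks t (Suc m) X))
      = (\<Sum>X\<in>Pow ({0..<m * t} \<union> block t m). walsh R X *
           (of_bool (meets_all_blocks t m (X \<inter> {0..<m * t})) * of_bool (X \<inter> block t m \<noteq> {})))"
    by (simp only: atLeastLessThan_Suc_mult_block meets_all_blocks_Suc
        meets_all_blocks_Int[OF order_refl] of_bool_conj)
  also have "\<dots> = (\<Sum>X\<in>Pow {0..<m * t}. walsh R X * of_bool (meets_all_blocks t m X))
      * (\<Sum>Y\<in>Pow (block t m). walsh R Y * of_bool (Y \<noteq> {}))"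
    using disj by (intro walsh_sum_Pow_Un_mult) auto
  also have "\<dots> = (\<Prod>i<m. (if R \<inter> block t i = {} then 2 ^ t else 0) - 1)
      * ((if R \<inter> block t m = {} then 2 ^ t else 0) - 1)"
    by (simp only: Suc.IH sum_walsh_Pow_nonempty[OF finite_block] sum_walsh_Pow[OF finite_block]
        card_block)
  finally show ?case
    by (simp only: prod.lessThan_Suc)
qed

definition block_transform :: "nat \<Rightarrow> nat \<Rightarrow> nat \<Rightarrow> nat set \<Rightarrow> real" where
  "block_transform n t m R = (if R \<inter> {m * t..<n} = {} then 2 ^ (n - m * t) else 0)
     * (\<Prod>i<m. (if R \<inter> block t i = {} then 2 ^ t else 0) - 1)"

lemma walsh_sum_meets_all_blocks:
  assumes "m * t \<le> n"
  shows "(\<Sum>X\<in>Pow {0..<n}. walsh R X * of_bool (meets_all_blocks t m X)) = block_transform n t m R"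
proof -
  have range_split: "{0..<n} = {0..<m * t} \<union> {m * t..<n}"
    using assms by auto
  have "(\<Sum>X\<in>Pow {0..<n}. walsh R X * of_bool (meets_all_blocks t m X))
      = (\<Sum>X\<in>Pow ({0..<m * t} \<union> {m * t..<n}). walsh R X *
           (of_bool (meets_all_blocks t m (X \<inter> {0..<m * t})) * (\<lambda>_. 1) (X \<inter> {m * t..<n})))"
    by (simp only: range_split meets_all_blocks_Int[OF order_refl] mult_1_right)
  also have "\<dots> = (\<Sum>X\<in>Pow {0..<m * t}. walsh R X * of_bool (meets_all_blocks t m X))
      * (\<Sum>Y\<in>Pow {m * t..<n}. walsh R Y * 1)"
    by (intro walsh_sum_Pow_Un_mult) auto
  finally show ?thesis
    using assms by (simp add: walsh_sum_meets_all_blocks_prod sum_walsh_Pow block_transform_def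
        mult.commute)
qed

lemma abs_block_transform:
  "\<bar>block_transform n t m R\<bar> = (if R \<inter> {m * t..<n} = {} then 2 ^ (n - m * t) else 0)
     * (2 ^ t - 1) ^ card {i\<in>{..<m}. R \<inter> block t i = {}}"
proof -
  have "\<bar>\<Prod>i<m. (if R \<inter> block t i = {} then 2 ^ t else 0) - 1 :: real\<bar>
      = (\<Prod>i<m. if R \<inter> block t i = {} then 2 ^ t - 1 else 1)"
    unfolding abs_prod by (intro prod.cong) auto
  also have "\<dots> = (2 ^ t - 1) ^ card {i\<in>{..<m}. R \<inter> block t i = {}}"
    by (simp add: prod.If_cases Int_def)
  finally show ?thesis
    by (simp add: block_transform_def abs_mult)
qed

section \<open>The vectors vanishing on some block\<close>

definition support :: "bool list \<Rightarrow> nat set" where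
  "support x = {i. i < length x \<and> x ! i}"

definition vec_of_set :: "nat \<Rightarrow> nat set \<Rightarrow> bool list" where
  "vec_of_set n S = map (\<lambda>i. i \<in> S) [0..<n]"

lemma vec_of_set_in_cube [simp]: "vec_of_set n S \<in> cube n"
  by (simp add: vec_of_set_def cube_def)

lemma support_vec_of_set: "S \<subseteq> {0..<n} \<Longrightarrow> support (vec_of_set n S) = S"
  by (auto simp: support_def vec_of_set_def)

lemma vec_of_set_support: "x \<in> cube n \<Longrightarrow> vec_of_set n (support x) = x"
  by (auto simp: support_def vec_of_set_def cube_def intro!: nth_equalityI)

lemma support_subset: "x \<in> cube n \<Longrightarrow> support x \<subseteq> {0..<n}"
  by (auto simp: support_def cube_def)

lemma inj_on_vec_of_set: "inj_on (vec_of_set n) (Pow {0..<n})"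
  by (metis PowD inj_onI support_vec_of_set)

lemma inj_on_support: "inj_on support (cube n)"
  by (metis inj_onI vec_of_set_support)

lemma cube_eq_image: "cube n = vec_of_set n ` Pow {0..<n}"
proof
  show "cube n \<subseteq> vec_of_set n ` Pow {0..<n}"
    using support_subset vec_of_set_support by (metis PowI image_eqI subsetI)
qed auto

lemma finite_cube [simp]: "finite (cube n)"
  by (simp add: cube_eq_image)

lemma ip_vec_of_set:
  assumes "length r = n" "S \<subseteq> {0..<n}"
  shows "ip r (vec_of_set n S) \<longleftrightarrow> odd (card (support r \<inter> S))"
proof -
  have "{i. i < length r \<and> r ! i \<and> vec_of_set n S ! i} = support r \<inter> S"
    using assms by (auto simp: support_def vec_of_set_def)
  then show ?thesis
    by (simp add: ip_def)
qed

lemma fourier_eq_walsh_sum: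
  assumes "r \<in> cube n"
  shows "fourier n A r = (\<Sum>X\<in>Pow {0..<n}. walsh (support r) X * of_bool (vec_of_set n X \<in> A))"
proof -
  have "(if ip r (vec_of_set n X) then -1 else 1) = walsh (support r) X" if "X \<subseteq> {0..<n}" for X
    using assms that by (simp add: ip_vec_of_set cube_def walsh_def)
  then show ?thesis
    unfolding fourier_def cube_eq_image by (simp add: sum.reindex[OF inj_on_vec_of_set] of_bool_def)
qed

definition zero_block_set :: "nat \<Rightarrow> nat \<Rightarrow> nat \<Rightarrow> bool list set" where
  "zero_block_set n t m = {x \<in> cube n. \<exists>i<m. support x \<inter> block t i = {}}"

lemma zero_block_set_subset_cube: "zero_block_set n t m \<subseteq> cube n"
  by (auto simp: zero_block_set_def)

lemma fourier_zero_block_set: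
  assumes "r \<in> cube n" "m * t \<le> n"
  shows "fourier n (zero_block_set n t m) r
    = of_bool (support r = {}) * 2 ^ n - block_transform n t m (support r)"
proof -
  have "of_bool (vec_of_set n X \<in> zero_block_set n t m) = (1 - of_bool (meets_all_blocks t m X) :: real)"
    if "X \<subseteq> {0..<n}" for X
    using that by (simp add: zero_block_set_def support_vec_of_set meets_all_blocks_def)
  then have "fourier n (zero_block_set n t m) r = (\<Sum>X\<in>Pow {0..<n}. walsh (support r) X)
      - (\<Sum>X\<in>Pow {0..<n}. walsh (support r) X * of_bool (meets_all_blocks t m X))"
    by (simp add: fourier_eq_walsh_sum[OF assms(1)] right_diff_distrib sum_subtractf)
  then show ?thesis
    using support_subset[OF assms(1)]
    by (simp add: sum_walsh_Pow walsh_sum_meets_all_blocks[OF assms(2)] Int_absorb2)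
qed

lemma fourier_vzero:
  assumes "A \<subseteq> cube n"
  shows "fourier n A (vzero n) = card A"
proof -
  have "\<not> ip (vzero n) x" for x
  proof -
    have "{i. i < length (vzero n) \<and> vzero n ! i \<and> x ! i} = {}"
      by (auto simp: vzero_def)
    then show ?thesis
      unfolding ip_def by (metis card.empty even_zero)
  qed
  then show ?thesis
    using assms by (simp add: fourier_def sum.If_cases Int_absorb1)
qed

lemma card_zero_block_set:
  assumes "m * t \<le> n"
  shows "real (card (zero_block_set n t m)) = 2 ^ n - 2 ^ (n - m * t) * (2 ^ t - 1) ^ m"
proof -
  have "vzero n \<in> cube n" "support (vzero n) = {}"
    by (auto simp: vzero_def cube_def support_def)
  then show ?thesis
    using fourier_zero_block_set[of "vzero n" n m t] assms
    by (simp add: fourier_vzero[OF zero_block_set_subset_cube] block_transform_def)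
qed

lemma two_power_split:
  "m * t \<le> n \<Longrightarrow> (2::real) ^ n = 2 ^ (n - m * t) * (2 ^ t) ^ m"
  by (simp add: power_add[symmetric] power_mult[symmetric] mult.commute)

lemma card_zero_block_set_density:
  assumes "m * t \<le> n"
  shows "real m / (2 ^ t + real m) * 2 ^ n \<le> card (zero_block_set n t m)"
    and "card (zero_block_set n t m) \<le> real m / 2 ^ t * 2 ^ n"
proof -
  define P :: real where "P = 1 / 2 ^ t"
  have P: "0 < P" "P \<le> 1"
    by (simp_all add: P_def)
  have "(2 ^ t - 1 :: real) ^ m = (2 ^ t) ^ m * (1 - P) ^ m"
    by (simp add: P_def power_mult_distrib[symmetric] right_diff_distrib)
  then have card: "real (card (zero_block_set n t m)) = 2 ^ n * (1 - (1 - P) ^ m)"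
    using card_zero_block_set[OF assms] two_power_split[OF assms] by (simp add: algebra_simps)
  have "1 + real m * P \<le> (1 + P) ^ m"
    using Bernoulli_inequality[of P m] P by simp
  moreover have "(1 - P) ^ m * (1 + P) ^ m \<le> 1"
    using P by (simp add: power_mult_distrib[symmetric] algebra_simps mult_le_one power_le_one)
  ultimately have "(1 - P) ^ m * (1 + real m * P) \<le> 1"
    using P by (smt (verit) mult_left_mono zero_le_power)
  then have "(1 - P) ^ m \<le> 1 / (1 + real m * P)"
    using P by (simp add: pos_le_divide_eq add_pos_nonneg)
  moreover have "real m / (2 ^ t + real m) = 1 - 1 / (1 + real m * P)"
    using add_pos_nonneg[of "2 ^ t :: real" "real m"] by (simp add: P_def field_simps)
  ultimately have "real m / (2 ^ t + real m) \<le> 1 - (1 - P) ^ m"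
    by linarith
  then have "real m / (2 ^ t + real m) * 2 ^ n \<le> (1 - (1 - P) ^ m) * 2 ^ n"
    by (intro mult_right_mono) auto
  then show "real m / (2 ^ t + real m) * 2 ^ n \<le> card (zero_block_set n t m)"
    using card by (metis mult.commute)
  have "1 - real m * P \<le> (1 - P) ^ m"
    using Bernoulli_inequality[of "-P" m] P by simp
  have "real (card (zero_block_set n t m)) = (1 - (1 - P) ^ m) * 2 ^ n"
    using card by simp
  also have "\<dots> \<le> real m * P * 2 ^ n"
    using \<open>1 - real m * P \<le> (1 - P) ^ m\<close> by (intro mult_right_mono) auto
  also have "\<dots> = real m / 2 ^ t * 2 ^ n"
    by (simp add: P_def)
  finally show "card (zero_block_set n t m) \<le> real m / 2 ^ t * 2 ^ n" .
qed

definition single_block_vectors :: "nat \<Rightarrow> nat \<Rightarrow> nat \<Rightarrow> bool list set" where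
  "single_block_vectors n t m = {r \<in> cube n. \<exists>i<m. support r \<subseteq> block t i}"

lemma single_block_vectors_subset_cube: "single_block_vectors n t m \<subseteq> cube n"
  by (auto simp: single_block_vectors_def)

lemma card_missed_blocks_single:
  assumes "R \<noteq> {}" "i < m" "R \<subseteq> block t i"
  shows "card {j\<in>{..<m}. R \<inter> block t j = {}} = m - 1"
proof -
  have "R \<inter> block t j = {} \<longleftrightarrow> j \<noteq> i" for j
    using assms(1,3) disjoint_blocks[of i j t] by auto
  then have "{j\<in>{..<m}. R \<inter> block t j = {}} = {..<m} - {i}"
    by auto
  then show ?thesis
    using assms(2) by simp
qed

lemma card_missed_blocks_spread:
  assumes "R \<subseteq> {0..<m * t}" "R \<noteq> {}" "\<nexists>i. i < m \<and> R \<subseteq> block t i"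
  shows "card {j\<in>{..<m}. R \<inter> block t j = {}} \<le> m - 2"
proof -
  obtain x where x: "x \<in> R"
    using assms(2) by blast
  then have i: "x \<in> block t (x div t)" "x div t < m"
    using mem_block_div assms(1) by auto
  then obtain y where y: "y \<in> R" "y \<notin> block t (x div t)"
    using assms(3) by blast
  then have j: "y \<in> block t (y div t)" "y div t < m"
    using mem_block_div assms(1) by auto
  have "x div t \<noteq> y div t"
    using y(2) j(1) by auto
  have "{j\<in>{..<m}. R \<inter> block t j = {}} \<subseteq> {..<m} - {x div t, y div t}"
    using x y i j by auto
  then have "card {j\<in>{..<m}. R \<inter> block t j = {}} \<le> card ({..<m} - {x div t, y div t})"
    by (intro card_mono) auto
  also have "\<dots> = m - 2"
    using i j \<open>x div t \<noteq> y div t\<close> by (simp add: card_Diff_subset)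
  finally show ?thesis .
qed

lemma abs_block_transform_single:
  assumes "R \<noteq> {}" "i < m" "R \<subseteq> block t i"
  shows "\<bar>block_transform n t m R\<bar> = 2 ^ (n - m * t) * (2 ^ t - 1) ^ (m - 1)"
proof -
  have "R \<inter> {m * t..<n} = {}"
    using assms(2,3) block_subset[of i m t] by auto
  then show ?thesis
    using abs_block_transform[of n t m R] card_missed_blocks_single[OF assms] by simp
qed

lemma abs_block_transform_spread:
  assumes "R \<subseteq> {0..<n}" "R \<noteq> {}" "\<nexists>i. i < m \<and> R \<subseteq> block t i"
  shows "\<bar>block_transform n t m R\<bar> \<le> 2 ^ (n - m * t) * (2 ^ t) ^ (m - 2)"
proof (cases "R \<subseteq> {0..<m * t}")
  case True
  then have "R \<inter> {m * t..<n} = {}"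
    by auto
  have "((2::real) ^ t - 1) ^ card {j\<in>{..<m}. R \<inter> block t j = {}}
      \<le> (2 ^ t) ^ card {j\<in>{..<m}. R \<inter> block t j = {}}"
    by (intro power_mono) auto
  also have "\<dots> \<le> (2 ^ t) ^ (m - 2)"
    using card_missed_blocks_spread[OF True assms(2,3)] by (intro power_increasing) auto
  finally show ?thesis
    using abs_block_transform[of n t m R] \<open>R \<inter> {m * t..<n} = {}\<close> by simp
next
  case False
  then obtain x where "x \<in> R" "\<not> x < m * t"
    by (auto simp: subset_eq)
  then have "x \<in> R \<inter> {m * t..<n}"
    using assms(1) by auto
  then have "R \<inter> {m * t..<n} \<noteq> {}"
    by blast
  then show ?thesis
    using abs_block_transform[of n t m R] by simp
qed

lemma large_spec_zero_block_set:
  fixes \<alpha> :: real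
  assumes mt: "m * t \<le> n" and "1 \<le> m"
    and zero_bound: "\<alpha> * 2 ^ n \<le> card (zero_block_set n t m)"
    and single_bound: "\<alpha> * 2 ^ n \<le> 2 ^ (n - m * t) * (2 ^ t - 1) ^ (m - 1)"
    and spread_bound: "2 ^ (n - m * t) * (2 ^ t) ^ (m - 2) < \<alpha> * 2 ^ n"
  shows "large_spec n \<alpha> (zero_block_set n t m) = single_block_vectors n t m"
proof -
  have "\<alpha> * 2 ^ n \<le> \<bar>fourier n (zero_block_set n t m) r\<bar> \<longleftrightarrow> (\<exists>i<m. support r \<subseteq> block t i)"
    if r: "r \<in> cube n" for r
  proof (cases "support r = {}")
    case True
    then have "\<bar>fourier n (zero_block_set n t m) r\<bar> = card (zero_block_set n t m)"
      using fourier_zero_block_set[OF r mt] card_zero_block_set[OF mt] by (simp add: block_transform_def)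
    moreover have "\<exists>i<m. support r \<subseteq> block t i"
      using True \<open>1 \<le> m\<close> by (auto intro!: exI[of _ 0])
    ultimately show ?thesis
      using zero_bound by simp
  next
    case False
    then have F: "\<bar>fourier n (zero_block_set n t m) r\<bar> = \<bar>block_transform n t m (support r)\<bar>"
      using fourier_zero_block_set[OF r mt] by simp
    show ?thesis
    proof (cases "\<exists>i<m. support r \<subseteq> block t i")
      case True
      then show ?thesis
        using F abs_block_transform_single[OF False] single_bound by auto
    next
      case spread: False
      then have "\<bar>fourier n (zero_block_set n t m) r\<bar> < \<alpha> * 2 ^ n"
        using F abs_block_transform_spread[OF support_subset[OF r] False spread] spread_bound
        by linarith
      then show ?thesis
        using spread by auto
    qed
  qed
  then show ?thesis
    by (auto simp: large_spec_def single_block_vectors_def)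
qed

lemma card_single_block_vectors:
  assumes "m * t \<le> n"
  shows "m * (2 ^ t - 1) \<le> card (single_block_vectors n t m)"
proof -
  let ?U = "\<Union>i<m. Pow (block t i) - {{}}"
  have "(Pow (block t i) - {{}}) \<inter> (Pow (block t j) - {{}}) = {}" if "i \<noteq> j" for i j
    using disjoint_blocks[OF that, of t] by blast
  then have "card ?U = (\<Sum>i<m. card (Pow (block t i) - {{}}))"
    by (intro card_UN_disjoint) auto
  also have "\<dots> = m * (2 ^ t - 1)"
    by (simp add: card_Pow)
  finally have card_U: "card ?U = m * (2 ^ t - 1)" .
  have U: "X \<subseteq> {0..<n}" "\<exists>i<m. X \<subseteq> block t i" if "X \<in> ?U" for X
  proof -
    obtain i where "i < m" "X \<subseteq> block t i"
      using \<open>X \<in> ?U\<close> by blast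
    moreover have "block t i \<subseteq> {0..<n}"
      using block_subset[OF \<open>i < m\<close>, of t] assms by auto
    ultimately show "X \<subseteq> {0..<n}" "\<exists>i<m. X \<subseteq> block t i"
      by auto
  qed
  then have "card (vec_of_set n ` ?U) = card ?U"
    by (intro card_image inj_on_subset[OF inj_on_vec_of_set]) blast
  moreover have "vec_of_set n ` ?U \<subseteq> single_block_vectors n t m"
  proof
    fix r
    assume "r \<in> vec_of_set n ` ?U"
    then obtain X where "X \<in> ?U" "r = vec_of_set n X"
      by blast
    then show "r \<in> single_block_vectors n t m"
      using U[OF \<open>X \<in> ?U\<close>] by (simp add: single_block_vectors_def support_vec_of_set)
  qed
  moreover have "finite (single_block_vectors n t m)"
    by (simp add: single_block_vectors_def)
  ultimately show ?thesis
    using card_mono card_U by metis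
qed

section \<open>Additive energy of the single-block vectors\<close>

definition sym_diff_list :: "'a set list \<Rightarrow> 'a set" where
  "sym_diff_list Ws = foldr sym_diff Ws {}"

lemma sym_diff_list_Nil [simp]: "sym_diff_list [] = {}"
  by (simp add: sym_diff_list_def)

lemma sym_diff_list_Cons [simp]: "sym_diff_list (W # Ws) = sym_diff W (sym_diff_list Ws)"
  by (simp add: sym_diff_list_def)

lemma sym_diff_list_append: "sym_diff_list (Ws @ Vs) = sym_diff (sym_diff_list Ws) (sym_diff_list Vs)"
  by (induction Ws) auto

lemma vadd_support:
  assumes "length x = length y"
  shows "length (vadd x y) = length x" "support (vadd x y) = sym_diff (support x) (support y)"
  using assms by (auto simp: vadd_def support_def)

lemma vsum_in_cube_support:
  assumes "set rs \<subseteq> cube n"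
  shows "vsum n rs \<in> cube n \<and> support (vsum n rs) = sym_diff_list (map support rs)"
  using assms
proof (induction rs)
  case Nil
  then show ?case
    by (simp add: vsum_def vzero_def cube_def support_def)
next
  case (Cons r rs)
  then have "length r = length (vsum n rs)"
    by (simp add: cube_def)
  then show ?case
    using Cons vadd_support[of r "vsum n rs"] by (simp add: vsum_def cube_def)
qed

definition block_lists :: "nat \<Rightarrow> nat list \<Rightarrow> nat set list set" where
  "block_lists t b = {Ws. list_all2 (\<lambda>W i. W \<subseteq> block t i) Ws b}"

lemma block_lists_Nil [simp]: "block_lists t [] = {[]}"
  by (auto simp: block_lists_def)

lemma block_lists_Cons: "block_lists t (i # b) = (\<Union>W\<in>Pow (block t i). (#) W ` block_lists t b)"
  by (auto simp: block_lists_def list_all2_Cons2)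

lemma finite_block_lists [simp]: "finite (block_lists t b)"
  by (induction b) (auto simp: block_lists_Cons)

lemma sym_diff_list_block_lists:
  "Ws \<in> block_lists t b \<Longrightarrow> sym_diff_list Ws \<subseteq> (\<Union>i\<in>set b. block t i)"
proof (induction b arbitrary: Ws)
  case (Cons i b)
  then obtain W Vs where "Ws = W # Vs" "W \<subseteq> block t i" "Vs \<in> block_lists t b"
    by (auto simp: block_lists_Cons)
  then show ?case
    using Cons.IH[of Vs] by auto
qed simp

lemma block_lists_sym_diff_Cons:
  "{Ws \<in> block_lists t (i # b). sym_diff_list Ws = T}
    = (\<Union>W\<in>Pow (block t i). (#) W ` {Ws \<in> block_lists t b. sym_diff_list Ws = sym_diff W T})"
proof (intro set_eqI iffI)
  fix Ws
  assume "Ws \<in> {Ws \<in> block_lists t (i # b). sym_diff_list Ws = T}"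
  then obtain W Vs where "W \<subseteq> block t i" "Vs \<in> block_lists t b" "Ws = W # Vs"
    and "sym_diff W (sym_diff_list Vs) = T"
    by (auto simp: block_lists_Cons)
  moreover from this(4) have "sym_diff_list Vs = sym_diff W T"
    by auto
  ultimately show "Ws \<in> (\<Union>W\<in>Pow (block t i). (#) W ` {Ws \<in> block_lists t b. sym_diff_list Ws = sym_diff W T})"
    by blast
next
  fix Ws
  assume "Ws \<in> (\<Union>W\<in>Pow (block t i). (#) W ` {Ws \<in> block_lists t b. sym_diff_list Ws = sym_diff W T})"
  then obtain W Vs where "W \<subseteq> block t i" "Vs \<in> block_lists t b" "Ws = W # Vs"
    and "sym_diff_list Vs = sym_diff W T"
    by blast
  then show "Ws \<in> {Ws \<in> block_lists t (i # b). sym_diff_list Ws = T}"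
    by (auto simp: block_lists_Cons)
qed

lemma block_lists_sym_diff_Cons_fresh:
  assumes "i \<notin> set b"
  shows "{Ws \<in> block_lists t (i # b). sym_diff_list Ws = T}
    \<subseteq> (#) (T \<inter> block t i) ` {Ws \<in> block_lists t b. sym_diff_list Ws = sym_diff (T \<inter> block t i) T}"
proof
  fix Ws
  assume "Ws \<in> {Ws \<in> block_lists t (i # b). sym_diff_list Ws = T}"
  then obtain W Vs where W: "W \<subseteq> block t i" "Ws = W # Vs" "Vs \<in> block_lists t b"
    and Vs: "sym_diff_list Vs = sym_diff W T"
    unfolding block_lists_sym_diff_Cons by blast
  have "sym_diff_list Vs \<subseteq> (\<Union>j\<in>set b. block t j)"
    using sym_diff_list_block_lists[OF W(3)] .
  moreover have "block t j \<inter> block t i = {}" if "j \<in> set b" for j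
    using disjoint_blocks[of j i t] that assms by auto
  ultimately have "sym_diff W T \<inter> block t i = {}"
    unfolding Vs by blast
  then have "W = T \<inter> block t i"
    using W(1) by blast
  then show "Ws \<in> (#) (T \<inter> block t i) ` {Ws \<in> block_lists t b. sym_diff_list Ws = sym_diff (T \<inter> block t i) T}"
    using W Vs by blast
qed

lemma card_block_lists_sym_diff:
  "card {Ws \<in> block_lists t b. sym_diff_list Ws = T} \<le> 2 ^ (t * (length b - card (set b)))"
proof (induction b arbitrary: T)
  case Nil
  have "card {Ws \<in> block_lists t []. sym_diff_list Ws = T} \<le> card {[] :: nat set list}"
    by (intro card_mono) auto
  then show ?case
    by simp
next
  case (Cons i b)
  let ?S = "\<lambda>W. {Ws \<in> block_lists t b. sym_diff_list Ws = sym_diff W T}"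
  have IH: "card ((#) W ` ?S W) \<le> 2 ^ (t * (length b - card (set b)))" for W
    using card_image_le[of "?S W" "(#) W"] Cons.IH[of "sym_diff W T"] by simp
  show ?case
  proof (cases "i \<in> set b")
    case True
    have "card {Ws \<in> block_lists t (i # b). sym_diff_list Ws = T}
        \<le> (\<Sum>W\<in>Pow (block t i). card ((#) W ` ?S W))"
      unfolding block_lists_sym_diff_Cons by (rule card_UN_le) simp
    also have "\<dots> \<le> (\<Sum>W\<in>Pow (block t i). 2 ^ (t * (length b - card (set b))))"
      by (intro sum_mono IH)
    also have "\<dots> = 2 ^ t * 2 ^ (t * (length b - card (set b)))"
      by (simp add: card_Pow)
    also have "\<dots> = 2 ^ (t * (length (i # b) - card (set (i # b))))"
    proof -
      have "length (i # b) - card (set (i # b)) = Suc (length b - card (set b))"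
        using True card_length[of b] by (simp add: insert_absorb Suc_diff_le)
      then show ?thesis
        by (simp add: power_add)
    qed
    finally show ?thesis .
  next
    case False
    let ?W = "T \<inter> block t i"
    have "card {Ws \<in> block_lists t (i # b). sym_diff_list Ws = T} \<le> card ((#) ?W ` ?S ?W)"
      using block_lists_sym_diff_Cons_fresh[OF False] by (intro card_mono) auto
    then show ?thesis
      using IH[of ?W] False by simp
  qed
qed

definition labellings :: "nat \<Rightarrow> nat \<Rightarrow> nat list set" where
  "labellings m J = {b. set b \<subseteq> {..<m} \<and> length b = J}"

lemma finite_labellings [simp]: "finite (labellings m J)"
  unfolding labellings_def by (rule finite_lists_length_eq) simp

lemma ex_labelling:
  assumes "\<forall>W\<in>set Ws. \<exists>i<m. W \<subseteq> block t i"
  shows "\<exists>b\<in>labellings m (length Ws). Ws \<in> block_lists t b"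
  using assms
proof (induction Ws)
  case Nil
  have "[] \<in> labellings m 0"
    by (simp add: labellings_def)
  then show ?case
    by (intro bexI[of _ "[]"]) auto
next
  case (Cons W Ws)
  then obtain i b where "i < m" "W \<subseteq> block t i" "b \<in> labellings m (length Ws)" "Ws \<in> block_lists t b"
    by auto
  then have "i # b \<in> labellings m (length (W # Ws))" "W # Ws \<in> block_lists t (i # b)"
    by (auto simp: labellings_def block_lists_Cons)
  then show ?case
    by blast
qed

lemma supports_of_equal_sums:
  assumes "set rs \<subseteq> single_block_vectors n t m" "set rs' \<subseteq> single_block_vectors n t m"
    and "vsum n rs = vsum n rs'"
  shows "\<exists>b\<in>labellings m (length rs + length rs').
    map support (rs @ rs') \<in> block_lists t b \<and> sym_diff_list (map support (rs @ rs')) = {}"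
proof -
  have "sym_diff_list (map support (rs @ rs')) = sym_diff (support (vsum n rs)) (support (vsum n rs'))"
    using vsum_in_cube_support assms(1,2) single_block_vectors_subset_cube[of n t m]
    by (simp add: sym_diff_list_append)
  then have "sym_diff_list (map support (rs @ rs')) = {}"
    by (simp add: assms(3))
  moreover have "\<exists>b\<in>labellings m (length (map support (rs @ rs'))).
      map support (rs @ rs') \<in> block_lists t b"
    by (rule ex_labelling) (use assms(1,2) in \<open>auto simp: single_block_vectors_def\<close>)
  ultimately show ?thesis
    by simp
qed

lemma Tk_single_block_vectors_le:
  "Tk n k (single_block_vectors n t m)
    \<le> (\<Sum>b\<in>labellings m (2 * k). 2 ^ (t * (2 * k - card (set b))))"
proof -
  let ?B = "single_block_vectors n t m"
  let ?L = "{rs. set rs \<subseteq> ?B \<and> length rs = k}"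
  let ?S = "{(rs, rs'). rs \<in> ?L \<and> rs' \<in> ?L \<and> vsum n rs = vsum n rs'}"
  let ?f = "\<lambda>p. map support (fst p @ snd p)"
  let ?U = "\<Union>b\<in>labellings m (2 * k). {Ws \<in> block_lists t b. sym_diff_list Ws = {}}"
  have "inj_on ?f ?S"
  proof (rule inj_onI)
    fix p q
    assume p: "p \<in> ?S" and q: "q \<in> ?S" and eq: "?f p = ?f q"
    have "set (fst p @ snd p) \<union> set (fst q @ snd q) \<subseteq> cube n"
      using p q single_block_vectors_subset_cube[of n t m] by auto
    then have "fst p @ snd p = fst q @ snd q"
      using map_inj_on[OF eq] inj_on_subset[OF inj_on_support] by blast
    moreover have "length (fst p) = length (fst q)"
      using p q by auto
    ultimately show "p = q"
      by (simp add: prod_eq_iff)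
  qed
  moreover have "?f ` ?S \<subseteq> ?U"
  proof
    fix Ws
    assume "Ws \<in> ?f ` ?S"
    then obtain rs rs' where "Ws = map support (rs @ rs')" "set rs \<subseteq> ?B" "set rs' \<subseteq> ?B"
      and "length rs = k" "length rs' = k" "vsum n rs = vsum n rs'"
      by auto
    then show "Ws \<in> ?U"
      using supports_of_equal_sums[of rs n t m rs'] by (auto simp: mult_2)
  qed
  then have "card (?f ` ?S) \<le> card ?U"
    by (intro card_mono) auto
  ultimately have "Tk n k ?B \<le> card ?U"
    by (simp add: Tk_def card_image)
  also have "\<dots> \<le> (\<Sum>b\<in>labellings m (2 * k). card {Ws \<in> block_lists t b. sym_diff_list Ws = {}})"
    by (rule card_UN_le) simp
  also have "\<dots> \<le> (\<Sum>b\<in>labellings m (2 * k). 2 ^ (t * (2 * k - card (set b))))"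
  proof (rule sum_mono)
    fix b
    assume "b \<in> labellings m (2 * k)"
    then show "card {Ws \<in> block_lists t b. sym_diff_list Ws = {}} \<le> 2 ^ (t * (2 * k - card (set b)))"
      using card_block_lists_sym_diff[of t b "{}"] by (simp add: labellings_def)
  qed
  finally show ?thesis .
qed

lemma card_labellings_card_set:
  "card {b \<in> labellings m J. card (set b) = l} \<le> (m choose l) * l ^ J"
proof -
  let ?Ls = "{L. L \<subseteq> {..<m} \<and> card L = l}"
  have "{b \<in> labellings m J. card (set b) = l} \<subseteq> (\<Union>L\<in>?Ls. {b. set b \<subseteq> L \<and> length b = J})"
    by (auto simp: labellings_def)
  then have "card {b \<in> labellings m J. card (set b) = l}
      \<le> card (\<Union>L\<in>?Ls. {b. set b \<subseteq> L \<and> length b = J})"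
    by (intro card_mono) (auto intro!: finite_lists_length_eq intro: finite_subset)
  also have "\<dots> \<le> (\<Sum>L\<in>?Ls. card {b. set b \<subseteq> L \<and> length b = J})"
    by (rule card_UN_le) simp
  also have "\<dots> = (\<Sum>L\<in>?Ls. l ^ J)"
  proof (intro sum.cong refl)
    fix L
    assume "L \<in> ?Ls"
    then show "card {b. set b \<subseteq> L \<and> length b = J} = l ^ J"
      using finite_subset[of L "{..<m}"] by (simp add: card_lists_length_eq)
  qed
  also have "\<dots> = (m choose l) * l ^ J"
    using n_subsets[of "{..<m}" l] by simp
  finally show ?thesis .
qed

lemma sum_labellings_le:
  "(\<Sum>b\<in>labellings m J. (2::nat) ^ (t * (J - card (set b))))
    \<le> (\<Sum>l\<le>J. (m choose l) * l ^ J * 2 ^ (t * (J - l)))"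
proof -
  have "(\<lambda>b. card (set b)) ` labellings m J \<subseteq> {..J}"
    using card_length by (auto simp: labellings_def)
  then have "(\<Sum>b\<in>labellings m J. (2::nat) ^ (t * (J - card (set b))))
      = (\<Sum>l\<le>J. card {b \<in> labellings m J. card (set b) = l} * 2 ^ (t * (J - l)))"
    by (subst sum.group[symmetric, of _ "{..J}" "\<lambda>b. card (set b)"]) auto
  also have "\<dots> \<le> (\<Sum>l\<le>J. (m choose l) * l ^ J * 2 ^ (t * (J - l)))"
    by (intro sum_mono mult_right_mono card_labellings_card_set) simp
  finally show ?thesis .
qed

lemma power_mult_power_le:
  fixes \<mu> :: real
  assumes "0 \<le> \<mu>" "\<mu> * 2 ^ J \<le> 1" "1 \<le> l"
  shows "\<mu> ^ l * real l ^ J \<le> \<mu>"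
proof -
  have "l \<le> 2 ^ (l - 1)"
    using less_exp[of "l - 1"] assms(3) by linarith
  then have "real l \<le> 2 ^ (l - 1)"
    using of_nat_le_iff[of l "2 ^ (l - 1)"] by simp
  then have "real l ^ J \<le> (2 ^ J) ^ (l - 1)"
    by (metis power_mono power_mult mult.commute of_nat_0_le_iff)
  then have "\<mu> ^ (l - 1) * real l ^ J \<le> (\<mu> * 2 ^ J) ^ (l - 1)"
    using assms(1) by (simp add: mult_left_mono power_mult_distrib)
  also have "\<dots> \<le> 1"
    using assms by (intro power_le_one) auto
  finally have "\<mu> * (\<mu> ^ (l - 1) * real l ^ J) \<le> \<mu>"
    using assms(1) by (simp add: mult_left_le)
  then show ?thesis
    using assms(3) by (cases l) (auto simp: mult.assoc)
qed

lemma sum_binomial_power_le: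
  fixes m t J :: nat
  assumes "real m * 2 ^ J \<le> 2 ^ t" "1 \<le> J"
  shows "real (\<Sum>l\<le>J. (m choose l) * l ^ J * 2 ^ (t * (J - l)))
    \<le> (real J + 1) * (2 ^ t) ^ J * (real m / 2 ^ t)"
proof -
  define T :: real where "T = 2 ^ t"
  define \<mu> where "\<mu> = real m / T"
  have "T > 0" "real m = \<mu> * T" "0 \<le> \<mu>"
    by (simp_all add: T_def \<mu>_def)
  have "\<mu> * 2 ^ J \<le> 1"
    using assms(1) \<open>T > 0\<close> by (simp add: \<mu>_def T_def field_simps)
  have term_le: "real (m choose l) * real l ^ J * T ^ (J - l) \<le> T ^ J * \<mu>" if "l \<le> J" for l
  proof (cases "l = 0")
    case True
    then show ?thesis
      using assms(2) \<open>T > 0\<close> \<open>0 \<le> \<mu>\<close> by (simp add: power_0_left)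
  next
    case False
    have "m choose l \<le> m ^ l"
      by (cases "l \<le> m") (auto simp: binomial_le_pow binomial_eq_0)
    then have "real (m choose l) \<le> (\<mu> * T) ^ l"
      by (metis of_nat_le_iff of_nat_power \<open>real m = \<mu> * T\<close>)
    then have "real (m choose l) * real l ^ J * T ^ (J - l) \<le> (\<mu> * T) ^ l * real l ^ J * T ^ (J - l)"
      using \<open>T > 0\<close> by (intro mult_right_mono) auto
    also have "\<dots> = (\<mu> ^ l * real l ^ J) * (T ^ l * T ^ (J - l))"
      by (simp add: power_mult_distrib)
    also have "\<dots> \<le> \<mu> * T ^ J"
      using power_mult_power_le[OF \<open>0 \<le> \<mu>\<close> \<open>\<mu> * 2 ^ J \<le> 1\<close>] False that \<open>T > 0\<close>
      by (simp add: power_add[symmetric] mult_right_mono)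
    finally show ?thesis
      by (simp add: mult.commute)
  qed
  have "real (\<Sum>l\<le>J. (m choose l) * l ^ J * 2 ^ (t * (J - l)))
      = (\<Sum>l\<le>J. real (m choose l) * real l ^ J * T ^ (J - l))"
    by (simp add: T_def power_mult)
  also have "\<dots> \<le> (\<Sum>l\<le>J. T ^ J * \<mu>)"
    using term_le by (intro sum_mono) simp
  also have "\<dots> = (real J + 1) * T ^ J * \<mu>"
    by simp
  finally show ?thesis
    by (simp only: T_def \<mu>_def)
qed

lemma Tk_single_block_vectors_le_density:
  assumes "real m * 4 ^ k \<le> 2 ^ t" "1 \<le> k"
  shows "Tk n k (single_block_vectors n t m) \<le> (real (2 * k) + 1) * (2 ^ t) ^ (2 * k) * (real m / 2 ^ t)"
proof -
  have "Tk n k (single_block_vectors n t m)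
      \<le> (\<Sum>l\<le>2 * k. (m choose l) * l ^ (2 * k) * 2 ^ (t * (2 * k - l)))"
    using Tk_single_block_vectors_le sum_labellings_le by (rule order.trans)
  then have "real (Tk n k (single_block_vectors n t m))
      \<le> real (\<Sum>l\<le>2 * k. (m choose l) * l ^ (2 * k) * 2 ^ (t * (2 * k - l)))"
    by (simp only: of_nat_le_iff)
  also have "\<dots> \<le> (real (2 * k) + 1) * (2 ^ t) ^ (2 * k) * (real m / 2 ^ t)"
    using assms by (intro sum_binomial_power_le) (auto simp: power_mult)
  finally show ?thesis .
qed

section \<open>Choice of the parameters\<close>

lemma exists_power_of_two_below:
  fixes x :: real
  assumes "1 \<le> x"
  obtains t :: nat where "2 ^ t \<le> x" "x < 2 * 2 ^ t" "real t \<le> log 2 x"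
proof
  define t where "t = nat \<lfloor>log 2 x\<rfloor>"
  have "0 \<le> log 2 x"
    using assms by simp
  then have t: "real t \<le> log 2 x" "log 2 x < real t + 1"
    unfolding t_def by linarith+
  show "real t \<le> log 2 x"
    by (fact t(1))
  show "2 ^ t \<le> x"
    using t(1) assms by (simp add: le_log_iff powr_realpow)
  have "x < 2 powr (real t + 1)"
    using t(2) assms by (simp add: log_less_iff)
  then show "x < 2 * 2 ^ t"
    by (simp add: powr_add powr_realpow)
qed

lemma four_power_le_of_log:
  fixes y :: real
  assumes "0 < y" "real k \<le> 1 / 2 * log 2 y"
  shows "4 ^ k \<le> y"
proof -
  have "2 powr real (2 * k) \<le> y"
    using assms le_log_iff[of 2 y "real (2 * k)"] by simp
  moreover have "(2::real) powr real (2 * k) = 4 ^ k"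
    by (subst powr_realpow) (auto simp: power_mult)
  ultimately show ?thesis
    by simp
qed

locale block_parameters =
  fixes n t m :: nat and \<delta> \<alpha> :: real
  assumes blocks_fit: "m * t \<le> n"
    and \<alpha>_pos: "0 < \<alpha>" and \<alpha>_le_\<delta>: "\<alpha> \<le> \<delta> / 2" and \<delta>_le: "\<delta> \<le> 1 / 32"
    and block_size: "2 * \<alpha> * 2 ^ t \<le> 1" "1 < 4 * \<alpha> * 2 ^ t"
    and block_count: "3 * \<delta> * 2 ^ t \<le> m" "m < 5 * \<delta> * 2 ^ t"
begin

lemma \<delta>_pos: "0 < \<delta>"
  using \<alpha>_pos \<alpha>_le_\<delta> by linarith

lemma two_le_block_count: "2 \<le> m"
proof -
  have "2 * \<alpha> * 2 ^ t \<le> \<delta> * 2 ^ t"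
    using \<alpha>_le_\<delta> by (intro mult_right_mono) auto
  then have "1 < real m"
    using block_size(2) block_count(1) by linarith
  then show ?thesis
    by simp
qed

lemma sixteen_less_block_size: "16 < (2::real) ^ t"
proof -
  have "4 * \<alpha> * 2 ^ t \<le> 1 / 16 * 2 ^ t"
    using \<alpha>_le_\<delta> \<delta>_le by (intro mult_right_mono) auto
  then show ?thesis
    using block_size(2) by linarith
qed

lemma card_zero_block_set_bounds:
  "\<delta> * 2 ^ n \<le> card (zero_block_set n t m)" "card (zero_block_set n t m) \<le> 8 * \<delta> * 2 ^ n"
proof -
  have "\<delta> * real m \<le> 1 / 32 * real m"
    using \<delta>_le by (intro mult_right_mono) auto
  then have "\<delta> * (2 ^ t + real m) \<le> real m"
    using block_count(1) by (simp add: algebra_simps)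
  then have "\<delta> \<le> real m / (2 ^ t + real m)"
    by (simp add: pos_le_divide_eq add_pos_nonneg)
  then have "\<delta> * 2 ^ n \<le> real m / (2 ^ t + real m) * 2 ^ n"
    by (intro mult_right_mono) auto
  then show "\<delta> * 2 ^ n \<le> card (zero_block_set n t m)"
    using card_zero_block_set_density(1)[OF blocks_fit] by linarith
  have "real m / 2 ^ t \<le> 8 * \<delta>"
    using block_count(2) \<delta>_pos by (simp add: divide_le_eq)
  then have "real m / 2 ^ t * 2 ^ n \<le> 8 * \<delta> * 2 ^ n"
    by (intro mult_right_mono) auto
  then show "card (zero_block_set n t m) \<le> 8 * \<delta> * 2 ^ n"
    using card_zero_block_set_density(2)[OF blocks_fit] by linarith
qed

lemma single_block_coefficient_ge: "\<alpha> * (2 ^ t) ^ m \<le> (2 ^ t - 1) ^ (m - 1)"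
proof -
  define T :: real where "T = 2 ^ t"
  have T: "16 < T" "2 * \<alpha> * T \<le> 1" "real m < 5 * \<delta> * T"
    using sixteen_less_block_size block_size block_count by (simp_all add: T_def)
  have "5 * \<delta> * T \<le> 5 * (1 / 32) * T"
    using \<delta>_le T(1) by (intro mult_right_mono) auto
  then have "real (m - 1) \<le> T / 2"
    using T(3) by linarith
  then have "real (m - 1) / T \<le> 1 / 2"
    using T(1) by (simp add: divide_le_eq)
  then have "\<alpha> * T \<le> 1 - real (m - 1) / T"
    using T(2) by linarith
  also have "\<dots> \<le> (1 - 1 / T) ^ (m - 1)"
    using Bernoulli_inequality[of "- (1 / T)" "m - 1"] T(1) by simp
  finally have "(\<alpha> * T) * T ^ (m - 1) \<le> (1 - 1 / T) ^ (m - 1) * T ^ (m - 1)"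
    using T(1) by (intro mult_right_mono) auto
  also have "\<dots> = (T - 1) ^ (m - 1)"
    using T(1) by (simp add: power_mult_distrib[symmetric] field_simps)
  finally show ?thesis
    using two_le_block_count by (simp add: T_def power_eq_if mult.assoc)
qed

lemma spread_coefficient_less: "(2 ^ t) ^ (m - 2) < \<alpha> * (2 ^ t) ^ m"
proof -
  define T :: real where "T = 2 ^ t"
  have T: "16 < T" "1 < 4 * \<alpha> * T"
    using sixteen_less_block_size block_size by (simp_all add: T_def)
  have "1 / 4 * 16 < (\<alpha> * T) * T"
    using T by (intro mult_strict_mono) auto
  then have "1 * T ^ (m - 2) < (\<alpha> * T ^ 2) * T ^ (m - 2)"
    using T(1) by (intro mult_strict_right_mono) (auto simp: power2_eq_square)
  also have "\<dots> = \<alpha> * T ^ m"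
    using two_le_block_count by (metis le_add_diff_inverse power_add mult.assoc)
  finally show ?thesis
    by (simp add: T_def)
qed

lemma large_spec_eq: "large_spec n \<alpha> (zero_block_set n t m) = single_block_vectors n t m"
proof (rule large_spec_zero_block_set[OF blocks_fit])
  define c :: real where "c = 2 ^ (n - m * t)"
  have c: "0 < c" "2 ^ n = c * (2 ^ t) ^ m"
    using two_power_split[OF blocks_fit] by (simp_all add: c_def)
  show "1 \<le> m"
    using two_le_block_count by simp
  have "\<alpha> * 2 ^ n \<le> \<delta> * 2 ^ n"
    using \<alpha>_le_\<delta> \<delta>_pos by (intro mult_right_mono) auto
  then show "\<alpha> * 2 ^ n \<le> card (zero_block_set n t m)"
    using card_zero_block_set_bounds(1) by linarith
  show "\<alpha> * 2 ^ n \<le> 2 ^ (n - m * t) * (2 ^ t - 1) ^ (m - 1)"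
    using mult_left_mono[OF single_block_coefficient_ge, of c] c by (simp add: c_def mult.left_commute)
  show "2 ^ (n - m * t) * (2 ^ t) ^ (m - 2) < \<alpha> * 2 ^ n"
    using mult_strict_left_mono[OF spread_coefficient_less, of c] c by (simp add: c_def mult.left_commute)
qed

lemma card_large_spec: "\<delta> / (8 * \<alpha> ^ 2) \<le> card (large_spec n \<alpha> (zero_block_set n t m))"
proof -
  define T :: real where "T = 2 ^ t"
  have T: "16 < T" "1 < 4 * \<alpha> * T" "3 * \<delta> * T \<le> real m"
    using sixteen_less_block_size block_size block_count by (simp_all add: T_def)
  have "1 * 1 < (4 * \<alpha> * T) * (4 * \<alpha> * T)"
    using T(1,2) \<alpha>_pos by (intro mult_strict_mono) auto
  then have "1 / (16 * \<alpha> ^ 2) \<le> T ^ 2"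
    using \<alpha>_pos by (simp add: field_simps power2_eq_square)
  then have "\<delta> / (8 * \<alpha> ^ 2) \<le> 2 * \<delta> * T ^ 2"
    using \<delta>_pos mult_left_mono[of "1 / (16 * \<alpha> ^ 2)" "T ^ 2" "2 * \<delta>"] by simp
  also have "\<dots> \<le> 3 * \<delta> * T * (T - 1)"
    using T(1) \<delta>_pos by (simp add: power2_eq_square algebra_simps)
  also have "\<dots> \<le> real m * (T - 1)"
    using T by (intro mult_right_mono) auto
  also have "\<dots> = real (m * (2 ^ t - 1))"
    by (simp add: T_def of_nat_diff)
  also have "\<dots> \<le> card (large_spec n \<alpha> (zero_block_set n t m))"
    unfolding large_spec_eq using card_single_block_vectors[OF blocks_fit] by (simp only: of_nat_le_iff)
  finally show ?thesis .
qed

lemma Tk_large_spec_le: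
  assumes "1 \<le> k" "4 ^ k * (8 * \<delta>) \<le> 1"
  shows "Tk n k (large_spec n \<alpha> (zero_block_set n t m)) \<le> 8 * \<delta> / \<alpha> ^ (2 * k)"
proof -
  define T :: real where "T = 2 ^ t"
  define \<mu> where "\<mu> = real m / T"
  have T: "0 < T" "2 * \<alpha> * T \<le> 1" and \<mu>: "0 \<le> \<mu>" "\<mu> < 5 * \<delta>"
    using block_size block_count by (simp_all add: T_def \<mu>_def field_simps)
  have "real m * 4 ^ k \<le> 5 * \<delta> * T * 4 ^ k"
    using block_count(2) by (simp add: T_def)
  also have "\<dots> \<le> T"
    using assms(2) T(1) by (simp add: field_simps)
  finally have "Tk n k (large_spec n \<alpha> (zero_block_set n t m)) \<le> (real (2 * k) + 1) * T ^ (2 * k) * \<mu>"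
    unfolding large_spec_eq T_def \<mu>_def using assms(1) by (intro Tk_single_block_vectors_le_density)
  also have "\<dots> \<le> 4 ^ k * T ^ (2 * k) * \<mu>"
  proof -
    have "2 * k + 1 \<le> (4::nat) ^ k"
      using less_exp[of "2 * k"] by (simp add: power_mult)
    then have "real (2 * k) + 1 \<le> 4 ^ k"
      using of_nat_le_iff[of "2 * k + 1" "4 ^ k", where 'a = real] by simp
    then show ?thesis
      using T(1) \<mu>(1) by (intro mult_right_mono) auto
  qed
  also have "\<dots> = (2 * \<alpha> * T) ^ (2 * k) * \<mu> / \<alpha> ^ (2 * k)"
    using \<alpha>_pos by (simp add: power_mult_distrib power_mult)
  also have "\<dots> \<le> 8 * \<delta> / \<alpha> ^ (2 * k)"
  proof -
    have "(2 * \<alpha> * T) ^ (2 * k) \<le> 1"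
      using T \<alpha>_pos by (intro power_le_one) auto
    then have "(2 * \<alpha> * T) ^ (2 * k) * \<mu> \<le> \<mu>"
      using \<mu>(1) by (intro mult_left_le_one_le) auto
    then show ?thesis
      using \<mu>(2) \<delta>_pos \<alpha>_pos by (intro divide_right_mono) auto
  qed
  finally show ?thesis .
qed

end

lemma block_parameters_exist:
  assumes "0 < \<alpha>" "\<alpha> \<le> \<delta> / 2" "\<delta> \<le> 1 / 32"
    and "2 * \<delta> / \<alpha> * log 2 (1 / (2 * \<alpha>)) \<le> real n"
  shows "\<exists>t m. block_parameters n t m \<delta> \<alpha>"
proof -
  have "1 \<le> 1 / (2 * \<alpha>)"
    using assms(1-3) by (simp add: field_simps)
  then obtain t where t: "2 ^ t \<le> 1 / (2 * \<alpha>)" "1 / (2 * \<alpha>) < 2 * 2 ^ t"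
    and t_log: "real t \<le> log 2 (1 / (2 * \<alpha>))"
    by (rule exists_power_of_two_below)
  define T :: real where "T = 2 ^ t"
  have size: "2 * \<alpha> * T \<le> 1" "1 < 4 * \<alpha> * T"
    using t assms(1) by (simp_all add: T_def field_simps)
  define m where "m = nat \<lceil>3 * \<delta> * T\<rceil>"
  have "0 < 3 * \<delta> * T"
    using assms(1,2) by (simp add: T_def)
  then have m: "3 * \<delta> * T \<le> real m" "real m < 3 * \<delta> * T + 1"
    unfolding m_def by linarith+
  have "2 * \<alpha> * T \<le> \<delta> * T"
    using assms(2) by (intro mult_right_mono) (auto simp: T_def)
  then have count: "real m < 5 * \<delta> * T"
    using m(2) size(2) by linarith
  have "3 * \<delta> * T \<le> 3 * \<delta> * (1 / (2 * \<alpha>))"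
    using t(1) assms(1,2) by (intro mult_left_mono) (auto simp: T_def)
  then have "3 * \<delta> * T \<le> 3 / 2 * (\<delta> / \<alpha>)"
    by simp
  moreover have "2 \<le> \<delta> / \<alpha>"
    using assms(1,2) by (simp add: field_simps)
  ultimately have "real m \<le> 2 * (\<delta> / \<alpha>)"
    using m(2) by linarith
  then have "real m * real t \<le> 2 * (\<delta> / \<alpha>) * log 2 (1 / (2 * \<alpha>))"
    using t_log by (intro mult_mono) auto
  then have "m * t \<le> n"
    using assms(4) of_nat_le_iff[of "m * t" n, where 'a = real] by simp
  then show ?thesis
    using assms(1-3) size m(1) count unfolding block_parameters_def T_def by blast
qed

theorem theorem26:
  fixes n :: nat and \<delta> \<alpha> :: real
  assumes "n \<ge> 1"
    and "0 < \<delta>" "\<delta> \<le> 1" "0 < \<alpha>" "\<alpha> \<le> 1"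
    and "\<alpha> \<le> \<delta> / 2" "\<delta> \<le> 2 powr (-5)"
    and "(2 * \<delta> / \<alpha>) * log 2 (1 / (2 * \<alpha>)) \<le> log 2 (2 ^ n)"
  shows "\<exists>A \<subseteq> cube n.
     \<delta> * 2 ^ n \<le> real (card A) \<and> real (card A) \<le> 8 * \<delta> * 2 ^ n \<and>
     real (card (large_spec n \<alpha> A)) \<ge> \<delta> / (8 * \<alpha> ^ 2) \<and>
     (\<forall>k::nat. 2 \<le> k \<and> real k \<le> (1/2) * log 2 (1 / (8 * \<delta>)) \<longrightarrow>
        real (Tk n k (large_spec n \<alpha> A)) \<le> 8 * \<delta> / \<alpha> ^ (2 * k))"
proof -
  have "\<delta> \<le> 1 / 32"
    using assms(7) by (simp add: powr_minus powr_realpow)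
  moreover have "log 2 (2 ^ n) = real n"
    by (simp add: log_nat_power)
  ultimately obtain t m where "block_parameters n t m \<delta> \<alpha>"
    using block_parameters_exist assms(4,6,8) by metis
  then interpret block_parameters n t m \<delta> \<alpha> .
  have "4 ^ k * (8 * \<delta>) \<le> 1" if "real k \<le> 1 / 2 * log 2 (1 / (8 * \<delta>))" for k
    using four_power_le_of_log[OF _ that] \<delta>_pos by (simp add: field_simps)
  then show ?thesis
    using zero_block_set_subset_cube card_zero_block_set_bounds card_large_spec Tk_large_spec_le
    by (intro exI[of _ "zero_block_set n t m"]) auto
qed

end
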